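(* Let $G$ be a number all of whose options are numbers. Then $G\mathbin{:}1\triangleq\{G\mid R(G)\}$ and $G\mathbin{:}(-1)\triangleq\{L(G)\mid G\}$, where $1\cong\{0\mid\ \}$ and $-1\cong\{\ \mid 0\}$ with $0\cong\{\ \mid\ \}$.
   Context: Games are short normal-play combinatorial games, written $G\cong\{L(G)\mid R(G)\}$ ($\cong$ = identical literal forms). Disjunctive sum $G+H\cong\{L(G)+H,G+L(H)\mid R(G)+H,G+R(H)\}$, negation $-G\cong\{-R(G)\mid -L(G)\}$. Ordinal sum: $G\mathbin{:}H\cong\{L(G),\,G\mathbin{:}L(H)\mid R(G),\,G\mathbin{:}R(H)\}$. A number is a game $G$ with $G^L<G<G^R$ for all options. Equivalence modulo domination: $G\triangleq H$ means that in $G+(-H)$, for every move by either player as first player in one summand, the other player has a response in the other summand after which the responder wins. *)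

theory Defs
  imports Main
begin

text \<open>Short games as literal forms: a game is given by finite lists of Left and Right
options. (Order and multiplicity of options play no role in any notion below.)\<close>

datatype game = Game (lopts: "game list") (ropts: "game list")

definition zero :: game where "zero = Game [] []"
definition one :: game where "one = Game [zero] []"
definition neg_one :: game where "neg_one = Game [] [zero]"

fun neg :: "game \<Rightarrow> game" where
  "neg (Game l r) = Game (map neg r) (map neg l)"

function plus :: "game \<Rightarrow> game \<Rightarrow> game" where
  "plus (Game gl gr) (Game hl hr) =
     Game (map (\<lambda>x. plus x (Game hl hr)) gl @ map (\<lambda>y. plus (Game gl gr) y) hl)
          (map (\<lambda>x. plus x (Game hl hr)) gr @ map (\<lambda>y. plus (Game gl gr) y) hr)"
  by pat_completeness auto
termination
proof (relation "measure (\<lambda>(g, h). size g + size h)", goal_cases)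
  case 1 then show ?case by simp
qed (auto dest!: size_list_estimation'[OF _ order_refl, where f=size])

fun ordsum :: "game \<Rightarrow> game \<Rightarrow> game" where
  "ordsum g (Game hl hr) = Game (lopts g @ map (ordsum g) hl) (ropts g @ map (ordsum g) hr)"

text \<open>Normal play: wins True g = Left, moving first in g, wins;
  wins False g = Right, moving first in g, wins.\<close>
fun wins :: "bool \<Rightarrow> game \<Rightarrow> bool" where
  "wins True (Game l r) = (\<exists>x\<in>set l. \<not> wins False x)"
| "wins False (Game l r) = (\<exists>x\<in>set r. \<not> wins True x)"

definition game_le :: "game \<Rightarrow> game \<Rightarrow> bool" where
  "game_le g h \<longleftrightarrow> \<not> wins True (plus g (neg h))"

definition game_lt :: "game \<Rightarrow> game \<Rightarrow> bool" where
  "game_lt g h \<longleftrightarrow> game_le g h \<and> \<not> game_le h g"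

definition is_number :: "game \<Rightarrow> bool" where
  "is_number g \<longleftrightarrow> (\<forall>x\<in>set (lopts g). game_lt x g) \<and> (\<forall>x\<in>set (ropts g). game_lt g x)"

text \<open>Equivalence modulo domination, literally: in g + (-h), every first move in one summand
  has a response by the opponent in the other summand after which the responder wins
  (i.e. the player now to move, the original mover, loses moving first).\<close>
definition dom_equiv :: "game \<Rightarrow> game \<Rightarrow> bool" where
  "dom_equiv g h \<longleftrightarrow>
     (\<forall>x\<in>set (lopts g). \<exists>y\<in>set (ropts (neg h)). \<not> wins True (plus x y)) \<and>
     (\<forall>y\<in>set (lopts (neg h)). \<exists>x\<in>set (ropts g). \<not> wins True (plus x y)) \<and>
     (\<forall>x\<in>set (ropts g). \<exists>y\<in>set (lopts (neg h)). \<not> wins False (plus x y)) \<and>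
     (\<forall>y\<in>set (ropts (neg h)). \<exists>x\<in>set (lopts g). \<not> wins False (plus x y))"

end

theory Submission
  imports Defs
begin

text \<open>Literally \<open>G : 1 = {L(G), G | R(G)}\<close>. Against \<open>{G | R(G)}\<close>, the option \<open>G\<close> and
  the Right options are answered by their mirror images, since \<open>H - H\<close> is a second-player win.
  A move to a Left option \<open>x\<close> is answered by moving to \<open>-G\<close>, which leaves \<open>x - G \<le> 0\<close> because
  \<open>G\<close> is a number. The case \<open>G : (-1)\<close> is symmetric.\<close>

lemma lopts_plus: "lopts (plus g h) = map (\<lambda>x. plus x h) (lopts g) @ map (plus g) (lopts h)"
  by (cases g; cases h) auto

lemma ropts_plus: "ropts (plus g h) = map (\<lambda>x. plus x h) (ropts g) @ map (plus g) (ropts h)"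
  by (cases g; cases h) auto

lemma lopts_neg: "lopts (neg g) = map neg (ropts g)"
  by (cases g) auto

lemma ropts_neg: "ropts (neg g) = map neg (lopts g)"
  by (cases g) auto

lemma neg_neg [simp]: "neg (neg g) = g"
  by (induction g) (auto simp: map_idI)

lemma neg_plus: "neg (plus g h) = plus (neg g) (neg h)"
  by (induction g h rule: plus.induct) simp

lemma wins_True_iff: "wins True g \<longleftrightarrow> (\<exists>x\<in>set (lopts g). \<not> wins False x)"
  by (cases g) auto

lemma wins_False_iff: "wins False g \<longleftrightarrow> (\<exists>x\<in>set (ropts g). \<not> wins True x)"
  by (cases g) auto

lemma wins_True_plus:
  "wins True (plus g h) \<longleftrightarrow>
     (\<exists>x\<in>set (lopts g). \<not> wins False (plus x h)) \<or> (\<exists>y\<in>set (lopts h). \<not> wins False (plus g y))"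
  using wins_True_iff[of "plus g h"] by (auto simp: lopts_plus)

lemma wins_False_plus:
  "wins False (plus g h) \<longleftrightarrow>
     (\<exists>x\<in>set (ropts g). \<not> wins True (plus x h)) \<or> (\<exists>y\<in>set (ropts h). \<not> wins True (plus g y))"
  using wins_False_iff[of "plus g h"] by (auto simp: ropts_plus)

lemma wins_neg: "wins p (neg g) \<longleftrightarrow> wins (\<not> p) g"
proof (induction g arbitrary: p)
  case (Game l r)
  then show ?case by (cases p) auto
qed

lemma wins_plus_comm: "wins p (plus g h) \<longleftrightarrow> wins p (plus h g)"
proof (induction g h arbitrary: p rule: plus.induct)
  case (1 gl gr hl hr)
  let ?g = "Game gl gr" and ?h = "Game hl hr"
  have IH_g: "wins q (plus x ?h) \<longleftrightarrow> wins q (plus ?h x)" if "x \<in> set gl \<union> set gr" for x q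
    using 1 that by blast
  have IH_h: "wins q (plus ?g y) \<longleftrightarrow> wins q (plus y ?g)" if "y \<in> set hl \<union> set hr" for y q
    using 1 that by blast
  have "wins True (plus ?g ?h) \<longleftrightarrow> wins True (plus ?h ?g)"
    unfolding wins_True_plus game.sel using IH_g IH_h by blast
  moreover have "wins False (plus ?g ?h) \<longleftrightarrow> wins False (plus ?h ?g)"
    unfolding wins_False_plus game.sel using IH_g IH_h by blast
  ultimately show ?case by (cases p) simp_all
qed

text \<open>Tweedledum--Tweedledee: the second player copies every move into the other summand.\<close>
lemma not_wins_plus_neg_self: "\<not> wins p (plus g (neg g))"
proof (induction g arbitrary: p)
  case (Game l r)
  let ?g = "Game l r"
  have "\<not> wins True (plus ?g (neg ?g))"
    unfolding wins_True_plus using Game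
    by (auto simp: wins_False_plus lopts_neg ropts_neg simp del: neg.simps) blast+
  moreover have "\<not> wins False (plus ?g (neg ?g))"
    unfolding wins_False_plus using Game
    by (auto simp: wins_True_plus lopts_neg ropts_neg simp del: neg.simps) blast+
  ultimately show ?case by (cases p) simp_all
qed

lemma game_le_iff_not_wins_False: "game_le g h \<longleftrightarrow> \<not> wins False (plus h (neg g))"
proof -
  have "wins False (plus h (neg g)) \<longleftrightarrow> wins True (plus (neg h) g)"
    using wins_neg[of True "plus h (neg g)"] by (simp add: neg_plus)
  also have "\<dots> \<longleftrightarrow> wins True (plus g (neg h))"
    by (rule wins_plus_comm)
  finally show ?thesis
    by (simp add: game_le_def)
qed

lemma dom_equiv_Game_append_left:
  assumes "\<forall>x\<in>set l. game_le x g"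
  shows "dom_equiv (Game (l @ [g]) r) (Game [g] r)"
  using assms not_wins_plus_neg_self by (auto simp: dom_equiv_def game_le_def)

lemma dom_equiv_Game_append_right:
  assumes "\<forall>x\<in>set r. game_le g x"
  shows "dom_equiv (Game l (r @ [g])) (Game l [g])"
  using assms not_wins_plus_neg_self
  by (auto simp: dom_equiv_def game_le_iff_not_wins_False)

lemma ordsum_zero: "ordsum g zero = g"
  by (simp add: zero_def)

lemma ordsum_one: "ordsum g one = Game (lopts g @ [g]) (ropts g)"
  by (simp add: one_def ordsum_zero)

lemma ordsum_neg_one: "ordsum g neg_one = Game (lopts g) (ropts g @ [g])"
  by (simp add: neg_one_def ordsum_zero)

theorem corollary2p7:
  assumes "is_number G"
    and "\<forall>x\<in>set (lopts G) \<union> set (ropts G). is_number x"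
  shows "dom_equiv (ordsum G one) (Game [G] (ropts G))
       \<and> dom_equiv (ordsum G neg_one) (Game (lopts G) [G])"
proof -
  from assms(1) have "\<forall>x\<in>set (lopts G). game_le x G" and "\<forall>y\<in>set (ropts G). game_le G y"
    by (auto simp: is_number_def game_lt_def)
  then show ?thesis
    by (simp add: ordsum_one ordsum_neg_one dom_equiv_Game_append_left dom_equiv_Game_append_right)
qed

end
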